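(* Let $F_2$ be the free group on $a,b$ and $T=[a,b]=aba^{-1}b^{-1}$. For every positive integer $n$, $$(ab)^n=\prod_{i=1}^{n-1}\left(\prod_{j=0}^{i-1}[a^ib^{i-1-j},T^{-1}]\,T^{-1}\right)\cdot a^nb^n$$ in $F_2$, where the products are ordered from left to right with increasing $i$ and, for fixed $i$, increasing $j$.
   Context: Commutator convention: $[x,y]=xyx^{-1}y^{-1}$. An empty product equals $1$. *)

theory Defs
  imports "HOL-Algebra.Group"
begin

definition commutator :: "('a, 'b) monoid_scheme \<Rightarrow> 'a \<Rightarrow> 'a \<Rightarrow> 'a" where
  "commutator G x y = x \<otimes>\<^bsub>G\<^esub> y \<otimes>\<^bsub>G\<^esub> inv\<^bsub>G\<^esub> x \<otimes>\<^bsub>G\<^esub> inv\<^bsub>G\<^esub> y"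

definition list_prod :: "('a, 'b) monoid_scheme \<Rightarrow> 'a list \<Rightarrow> 'a" where
  "list_prod G xs = foldr (\<lambda>x acc. x \<otimes>\<^bsub>G\<^esub> acc) xs \<one>\<^bsub>G\<^esub>"

end

theory Submission
  imports Defs
begin

text \<open>
  Write T = [a,b]. For every y one has [y, T^-1] T^-1 = y T^-1 y^-1, and
  b^k T^-1 b^-k = (b^(k+1) a b^-(k+1)) (b^k a b^-k)^-1, so the inner product over j
  telescopes to a^i [b^i, a] a^-i. With c_i = a^i b^i this factor equals c_i (ab) c_(i+1)^-1,
  so the outer product telescopes to (ab)^n c_n^-1.
\<close>

context monoid
begin

lemma list_prod_Nil [simp]: "list_prod G [] = \<one>"
  by (simp add: list_prod_def)

lemma list_prod_Cons [simp]: "list_prod G (x # xs) = x \<otimes> list_prod G xs"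
  by (simp add: list_prod_def)

lemma list_prod_closed [intro, simp]: "set xs \<subseteq> carrier G \<Longrightarrow> list_prod G xs \<in> carrier G"
  by (induction xs) auto

lemma list_prod_append:
  "set xs \<subseteq> carrier G \<Longrightarrow> set ys \<subseteq> carrier G \<Longrightarrow>
    list_prod G (xs @ ys) = list_prod G xs \<otimes> list_prod G ys"
  by (induction xs) (auto simp: m_assoc)

end

context group
begin

lemma mult_inv_cancel_left [simp]:
  "x \<in> carrier G \<Longrightarrow> y \<in> carrier G \<Longrightarrow> x \<otimes> (inv x \<otimes> y) = y"
  by (simp add: m_assoc [symmetric])

lemma inv_mult_cancel_left [simp]:
  "x \<in> carrier G \<Longrightarrow> y \<in> carrier G \<Longrightarrow> inv x \<otimes> (x \<otimes> y) = y"
  by (simp add: m_assoc [symmetric])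

lemma commutator_closed [intro, simp]:
  "x \<in> carrier G \<Longrightarrow> y \<in> carrier G \<Longrightarrow> commutator G x y \<in> carrier G"
  by (simp add: commutator_def)

lemma inv_commutator:
  "x \<in> carrier G \<Longrightarrow> y \<in> carrier G \<Longrightarrow> inv (commutator G x y) = commutator G y x"
  by (simp add: commutator_def inv_mult_group m_assoc)

lemma commutator_inv_mult_inv:
  "x \<in> carrier G \<Longrightarrow> y \<in> carrier G \<Longrightarrow>
    commutator G x (inv y) \<otimes> inv y = x \<otimes> inv y \<otimes> inv x"
  by (simp add: commutator_def m_assoc)

lemma list_prod_telescoping:
  assumes f: "\<And>i. f i \<in> carrier G" and g: "g \<in> carrier G" and "m \<le> n"
  shows "list_prod G (map (\<lambda>i. f i \<otimes> g \<otimes> inv (f (Suc i))) [m..<n])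
    = f m \<otimes> g [^] (n - m) \<otimes> inv (f n)"
  using \<open>m \<le> n\<close>
proof (induction n rule: nat_induct_at_least)
  case base
  show ?case using f by simp
next
  case (Suc n)
  have "list_prod G (map (\<lambda>i. f i \<otimes> g \<otimes> inv (f (Suc i))) [m..<Suc n])
      = f m \<otimes> g [^] (n - m) \<otimes> inv (f n) \<otimes> (f n \<otimes> g \<otimes> inv (f (Suc n)))"
    using Suc f g by (simp add: list_prod_append image_subset_iff)
  also have "\<dots> = f m \<otimes> (g [^] (n - m) \<otimes> g) \<otimes> inv (f (Suc n))"
    using f g by (simp add: m_assoc)
  finally show ?case
    using \<open>m \<le> n\<close> by (simp add: Suc_diff_le)
qed

lemma list_prod_commutator_inv_commutator:
  assumes a: "a \<in> carrier G" and b: "b \<in> carrier G" and x: "x \<in> carrier G"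
  shows "list_prod G (map (\<lambda>j.
        commutator G (x \<otimes> b [^] (i - 1 - j)) (inv (commutator G a b))
        \<otimes> inv (commutator G a b)) [0..<i])
    = x \<otimes> commutator G (b [^] i) a \<otimes> inv x"
proof -
  define f where "f j = x \<otimes> b [^] (i - j) \<otimes> a \<otimes> inv (b [^] (i - j))" for j
  have f_closed: "f j \<in> carrier G" for j
    using a b x by (simp add: f_def)
  have factor: "commutator G (x \<otimes> b [^] (i - 1 - j)) (inv (commutator G a b))
      \<otimes> inv (commutator G a b) = f j \<otimes> \<one> \<otimes> inv (f (Suc j))" if "j < i" for j
  proof -
    obtain k where k: "i - j = Suc k" "i - Suc j = k" "i - 1 - j = k"
      using \<open>j < i\<close> by (metis Suc_diff_Suc diff_Suc_eq_diff_pred)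
    show ?thesis
      using a b x
      by (simp add: k f_def commutator_inv_mult_inv inv_commutator commutator_def
          nat_pow_Suc2 inv_mult_group m_assoc)
  qed
  have "list_prod G (map (\<lambda>j.
        commutator G (x \<otimes> b [^] (i - 1 - j)) (inv (commutator G a b))
        \<otimes> inv (commutator G a b)) [0..<i])
      = list_prod G (map (\<lambda>j. f j \<otimes> \<one> \<otimes> inv (f (Suc j))) [0..<i])"
    using factor by (intro arg_cong [where f = "list_prod G"] map_cong) auto
  also have "\<dots> = f 0 \<otimes> \<one> [^] i \<otimes> inv (f i)"
    using list_prod_telescoping [OF f_closed one_closed, of 0 i] by simp
  also have "\<dots> = x \<otimes> commutator G (b [^] i) a \<otimes> inv x"
    using a b x by (simp add: f_def commutator_def inv_mult_group m_assoc)
  finally show ?thesis .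
qed

lemma conj_pow_commutator_pow:
  assumes a: "a \<in> carrier G" and b: "b \<in> carrier G"
  shows "a [^] i \<otimes> commutator G (b [^] i) a \<otimes> inv (a [^] i)
    = (a [^] i \<otimes> b [^] i) \<otimes> (a \<otimes> b) \<otimes> inv (a [^] Suc i \<otimes> b [^] Suc i)"
  using a b by (simp add: commutator_def inv_mult_group m_assoc)

end

theorem lemma2p13:
  fixes G (structure) and a b :: 'a and n :: nat
  assumes "group G" and "a \<in> carrier G" and "b \<in> carrier G" and "n \<ge> 1"
  shows "(a \<otimes> b) [^] n =
    list_prod G (map (\<lambda>i. list_prod G (map (\<lambda>j.
        commutator G (a [^] i \<otimes> b [^] (i - 1 - j)) (inv (commutator G a b))
        \<otimes> inv (commutator G a b)) [0..<i])) [1..<n])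
    \<otimes> a [^] n \<otimes> b [^] n"
proof -
  interpret group G by fact
  note a = \<open>a \<in> carrier G\<close> and b = \<open>b \<in> carrier G\<close>
  define c where "c i = a [^] i \<otimes> b [^] i" for i :: nat
  have c_closed: "c i \<in> carrier G" for i
    using a b by (simp add: c_def)
  let ?factor = "\<lambda>i. list_prod G (map (\<lambda>j.
        commutator G (a [^] i \<otimes> b [^] (i - 1 - j)) (inv (commutator G a b))
        \<otimes> inv (commutator G a b)) [0..<i])"
  have factor: "?factor i = c i \<otimes> (a \<otimes> b) \<otimes> inv (c (Suc i))" for i
    unfolding c_def list_prod_commutator_inv_commutator [OF a b nat_pow_closed [OF a]]
    by (rule conj_pow_commutator_pow [OF a b])
  have "list_prod G (map ?factor [1..<n]) = c 1 \<otimes> (a \<otimes> b) [^] (n - 1) \<otimes> inv (c n)"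
    unfolding factor using c_closed a b \<open>n \<ge> 1\<close> by (simp add: list_prod_telescoping)
  then have "list_prod G (map ?factor [1..<n]) \<otimes> a [^] n \<otimes> b [^] n
      = (a \<otimes> b) \<otimes> (a \<otimes> b) [^] (n - 1) \<otimes> inv (c n) \<otimes> c n"
    using a b by (simp add: c_def m_assoc)
  also have "\<dots> = (a \<otimes> b) [^] n"
    using a b c_closed \<open>n \<ge> 1\<close> by (simp add: m_assoc nat_pow_Suc2 [symmetric])
  finally show ?thesis by simp
qed

end
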